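(* Let $(X,* )$ be a commutative hypergroup and let $(T_k)_{k\ge1}$ be a sequence of hypergroup automorphisms of $X$ which converges pointwise to a continuous map $T:X\to X$ such that $T(X)$ is closed in $X$. Then $T(X)$ is a subhypergroup of $X$ and $T(\delta_x*\delta_{\bar y})=\delta_{T(x)}*\delta_{\overline{T(y)}}$ for all $x,y\in X$, i.e. $T$ is a hypergroup homomorphism from $X$ onto $T(X)$.
   Context: A hypergroup $(X,* )$ is a locally compact Hausdorff space $X$ with a bilinear, associative, weakly continuous, probability preserving convolution $*$ on the bounded regular Borel measures $M_b(X)$ with $\mathrm{supp}(\delta_x*\delta_y)$ compact, an identity $e$ and a continuous involution $x\mapsto\bar x$ with $e\in\mathrm{supp}(\delta_x*\delta_y)\iff x=\bar y$ and $\delta_{\bar x}*\delta_{\bar y}=(\delta_y*\delta_x)^-$. A closed set $H\subset X$ is a subhypergroup if $\bar x\in H$ and $\mathrm{supp}(\delta_x*\delta_y)\subset H$ for all $x,y\in H$. A continuous map $T:X\to Y$ between hypergroups is a hypergroup homomorphism if $T(\delta_x*\delta_{\bar y})=\delta_{T(x)}*\delta_{\overline{T(y)}}$ for all $x,y$, where $T$ acts on measures by taking image measures; an automorphism is a homomorphism $X\to X$ which is a homeomorphism with homomorphic inverse. *)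

theory Defs
  imports "HOL-Analysis.Analysis" "HOL-Probability.Probability"
begin

definition msupp :: "'a::topological_space measure \<Rightarrow> 'a set" where
  "msupp \<mu> = {x. \<forall>U. open U \<longrightarrow> x \<in> U \<longrightarrow> emeasure \<mu> U > 0}"

definition regular_borel_prob :: "'a::topological_space measure \<Rightarrow> bool" where
  "regular_borel_prob \<mu> \<longleftrightarrow> prob_space \<mu> \<and> sets \<mu> = sets borel \<and>
     (\<forall>B \<in> sets borel. emeasure \<mu> B = (SUP K \<in> {K. compact K \<and> K \<subseteq> B}. emeasure \<mu> K))"

definition bcont :: "('a::topological_space \<Rightarrow> real) \<Rightarrow> bool" where
  "bcont f \<longleftrightarrow> continuous_on UNIV f \<and> bounded (range f)"

text \<open>The convolution is given on point masses: conv x y = \<delta>_x * \<delta>_y.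
  Its bilinear, weakly continuous extension to M_b(X) is determined by these values;
  associativity and weak continuity are stated via bounded continuous test functions.\<close>
definition hypergroup ::
  "('a::t2_space \<Rightarrow> 'a \<Rightarrow> 'a measure) \<Rightarrow> 'a \<Rightarrow> ('a \<Rightarrow> 'a) \<Rightarrow> bool" where
  "hypergroup conv e iv \<longleftrightarrow>
     locally_compact_space (euclidean :: 'a topology) \<and>
     (\<forall>x y. regular_borel_prob (conv x y)) \<and>
     (\<forall>x y. compact (msupp (conv x y))) \<and>
     (\<forall>f. bcont f \<longrightarrow> continuous_on UNIV (\<lambda>(x,y). integral\<^sup>L (conv x y) f)) \<and>
     (\<forall>f x y z. bcont f \<longrightarrow>
        integral\<^sup>L (conv x y) (\<lambda>w. integral\<^sup>L (conv w z) f)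
      = integral\<^sup>L (conv y z) (\<lambda>u. integral\<^sup>L (conv x u) f)) \<and>
     (\<forall>x. conv e x = return borel x \<and> conv x e = return borel x) \<and>
     continuous_on UNIV iv \<and> (\<forall>x. iv (iv x) = x) \<and>
     (\<forall>x y. e \<in> msupp (conv x y) \<longleftrightarrow> x = iv y) \<and>
     (\<forall>x y. conv (iv x) (iv y) = distr (conv y x) borel iv)"

definition comm_hypergroup ::
  "('a::t2_space \<Rightarrow> 'a \<Rightarrow> 'a measure) \<Rightarrow> 'a \<Rightarrow> ('a \<Rightarrow> 'a) \<Rightarrow> bool" where
  "comm_hypergroup conv e iv \<longleftrightarrow> hypergroup conv e iv \<and> (\<forall>x y. conv x y = conv y x)"

definition subhypergroup ::
  "('a::t2_space \<Rightarrow> 'a \<Rightarrow> 'a measure) \<Rightarrow> ('a \<Rightarrow> 'a) \<Rightarrow> 'a set \<Rightarrow> bool" where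
  "subhypergroup conv iv H \<longleftrightarrow> closed H \<and>
     (\<forall>x \<in> H. iv x \<in> H) \<and> (\<forall>x \<in> H. \<forall>y \<in> H. msupp (conv x y) \<subseteq> H)"

definition hg_hom ::
  "('a::t2_space \<Rightarrow> 'a \<Rightarrow> 'a measure) \<Rightarrow> ('a \<Rightarrow> 'a) \<Rightarrow> ('a \<Rightarrow> 'a) \<Rightarrow> bool" where
  "hg_hom conv iv T \<longleftrightarrow> continuous_on UNIV T \<and>
     (\<forall>x y. distr (conv x (iv y)) borel T = conv (T x) (iv (T y)))"

definition hg_aut ::
  "('a::t2_space \<Rightarrow> 'a \<Rightarrow> 'a measure) \<Rightarrow> ('a \<Rightarrow> 'a) \<Rightarrow> ('a \<Rightarrow> 'a) \<Rightarrow> bool" where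
  "hg_aut conv iv T \<longleftrightarrow> hg_hom conv iv T \<and>
     (\<exists>S. homeomorphism UNIV UNIV T S \<and> hg_hom conv iv S)"

end

theory Submission
  imports Defs
begin

text \<open>Pushing \<delta>(x) * \<delta>(iv y) forward along T_k gives \<delta>(T_k x) * \<delta>(iv (T_k y)).
  As k tends to infinity, dominated convergence on the left and weak continuity of the convolution
  on the right show that both sides of the homomorphism identity for T have the same integrals
  against bounded continuous functions. On a locally compact Hausdorff space these integrals
  determine a regular Borel probability measure (Urysohn), and the image of a regular measure under
  a continuous map is again regular; hence T is a homomorphism. Comparing point masses, T fixes e
  and commutes with iv, so \<delta>(T x) * \<delta>(T y) is the image of a measure under T and is supported
  in the closed set T(X).\<close>

lemma Hausdorff_space_euclidean_t2: "Hausdorff_space (euclidean :: 'a::t2_space topology)"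
  unfolding Hausdorff_space_def by (metis disjnt_def hausdorff open_openin topspace_euclidean UNIV_I)

lemma bcont_Urysohn:
  fixes K C :: "'a::t2_space set"
  assumes "locally_compact_space (euclidean :: 'a topology)" "compact K" "closed C" "K \<inter> C = {}"
  obtains f :: "'a \<Rightarrow> real"
    where "bcont f" "\<And>x. 0 \<le> f x \<and> f x \<le> 1" "\<And>x. x \<in> K \<Longrightarrow> f x = 1" "\<And>x. x \<in> C \<Longrightarrow> f x = 0"
proof -
  have "completely_regular_space (euclidean :: 'a topology)"
    using locally_compact_regular_imp_completely_regular_space assms(1) Hausdorff_space_euclidean_t2
    by blast
  moreover have "disjnt K C"
    using assms(4) by (simp add: disjnt_def)
  ultimately obtain f :: "'a \<Rightarrow> real"
    where f: "continuous_map euclidean (top_of_set {0..1}) f" "f ` C \<subseteq> {0}" "f ` K \<subseteq> {1}"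
    using Urysohn_completely_regular_compact_closed[of 0 1 euclidean K C] assms(2,3) by auto
  have range: "0 \<le> f x \<and> f x \<le> 1" for x
    using f(1) by (auto simp: continuous_map_in_subtopology)
  have "continuous_on UNIV f"
    using f(1) by (simp add: continuous_map_in_subtopology continuous_map_iff_continuous)
  moreover have "bounded (range f)"
    using range by (metis bounded_closed_interval bounded_subset image_subset_iff atLeastAtMost_iff)
  ultimately have "bcont f"
    unfolding bcont_def by blast
  then show ?thesis
    using f(2,3) range by (intro that[of f]) (auto simp: image_subset_iff)
qed

lemma measurable_borel_continuous_on:
  assumes "continuous_on UNIV f" "sets M = sets borel"
  shows "f \<in> M \<rightarrow>\<^sub>M borel"
  by (subst measurable_cong_sets[OF assms(2) refl]) (rule borel_measurable_continuous_onI[OF assms(1)])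

lemma bcont_bounded:
  assumes "bcont f"
  obtains B where "\<And>x. norm (f x) \<le> B"
proof -
  obtain B where "\<forall>y \<in> range f. norm y \<le> B"
    using assms unfolding bcont_def bounded_iff by blast
  then show thesis
    using that by blast
qed

lemma integrable_bcont:
  assumes "finite_measure M" "sets M = sets borel" "bcont f"
  shows "integrable M f"
proof -
  obtain B where B: "\<And>x. norm (f x) \<le> B"
    using bcont_bounded[OF assms(3)] by blast
  have "f \<in> borel_measurable M"
    by (rule measurable_borel_continuous_on[OF _ assms(2)]) (use assms(3) in \<open>simp add: bcont_def\<close>)
  then show ?thesis
    using finite_measure.integrable_const_bound[OF assms(1), of f B] B by simp
qed

lemma regular_borel_probD:
  assumes "regular_borel_prob \<mu>"
  shows "prob_space \<mu>" and "sets \<mu> = sets borel"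
    and "B \<in> sets borel \<Longrightarrow> emeasure \<mu> B = (SUP K \<in> {K. compact K \<and> K \<subseteq> B}. emeasure \<mu> K)"
  using assms unfolding regular_borel_prob_def by auto

lemma emeasure_eq_measure_prob: "prob_space M \<Longrightarrow> emeasure M A = ennreal (measure M A)"
  by (simp add: finite_measure.emeasure_eq_measure prob_space_def)

lemma prob_compl_borel:
  assumes "prob_space M" "sets M = sets borel" "A \<in> sets borel"
  shows "measure M (- A) = 1 - measure M A"
  using prob_space.prob_compl[OF assms(1), of A] sets_eq_imp_space_eq[OF assms(2)] assms
  by (simp add: Compl_eq_Diff_UNIV)

text \<open>A Urysohn function separating K from a compact C \<subseteq> -K gives M(K) \<le> N(-C); inner
  regularity of N on the open set -K then yields M(K) \<le> N(K).\<close>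
lemma measure_compact_le_of_integral_eq:
  fixes M N :: "'a::t2_space measure"
  assumes lc: "locally_compact_space (euclidean :: 'a topology)"
    and M: "prob_space M" "sets M = sets borel" and N: "regular_borel_prob N"
    and eq: "\<And>f. bcont f \<Longrightarrow> integral\<^sup>L M f = integral\<^sup>L N f"
    and K: "compact K"
  shows "measure M K \<le> measure N K"
proof -
  note Np = regular_borel_probD(1)[OF N] and Ns = regular_borel_probD(2)[OF N]
    and Nreg = regular_borel_probD(3)[OF N]
  have Kc: "closed K"
    using K compact_imp_closed by blast
  have separate: "measure M K \<le> 1 - measure N C" if C: "compact C" "C \<subseteq> - K" for C
  proof -
    obtain f :: "'a \<Rightarrow> real"
      where f: "bcont f" "\<And>x. 0 \<le> f x \<and> f x \<le> 1" "\<And>x. x \<in> K \<Longrightarrow> f x = 1" "\<And>x. x \<in> C \<Longrightarrow> f x = 0"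
      using bcont_Urysohn[OF lc K compact_imp_closed[OF C(1)]] C by blast
    have fin: "finite_measure M" "finite_measure N"
      using M(1) Np by (auto simp: prob_space_def)
    have Cc: "closed C"
      using C(1) compact_imp_closed by blast
    have "integrable M (indicator K :: 'a \<Rightarrow> real)"
      using Kc M(2) finite_measure.emeasure_finite[OF fin(1), of K] by (simp add: less_top)
    then have "integral\<^sup>L M (indicator K) \<le> integral\<^sup>L M f"
      by (rule integral_mono[OF _ integrable_bcont[OF fin(1) M(2) f(1)]])
        (use f in \<open>auto simp: indicator_def\<close>)
    moreover have "integrable N (indicator (- C) :: 'a \<Rightarrow> real)"
      using Cc Ns finite_measure.emeasure_finite[OF fin(2), of "- C"] by (simp add: less_top)
    then have "integral\<^sup>L N f \<le> integral\<^sup>L N (indicator (- C))"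
      by (rule integral_mono[OF integrable_bcont[OF fin(2) Ns f(1)]])
        (use f in \<open>auto simp: indicator_def\<close>)
    moreover have "measure M K = integral\<^sup>L M (indicator K)"
      using sets_eq_imp_space_eq[OF M(2)] by simp
    moreover have "integral\<^sup>L M f = integral\<^sup>L N f"
      using eq f(1) by simp
    moreover have "integral\<^sup>L N (indicator (- C)) = 1 - measure N C"
      using sets_eq_imp_space_eq[OF Ns] prob_compl_borel[OF Np Ns] Cc by simp
    ultimately show ?thesis
      by linarith
  qed
  have "emeasure N (- K) \<le> ennreal (1 - measure M K)"
    unfolding Nreg[OF borel_open[OF open_Compl[OF Kc]]]
  proof (rule SUP_least)
    fix C assume "C \<in> {C. compact C \<and> C \<subseteq> - K}"
    then have "measure N C \<le> 1 - measure M K"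
      using separate[of C] by simp
    then show "emeasure N C \<le> ennreal (1 - measure M K)"
      by (simp add: emeasure_eq_measure_prob[OF Np] ennreal_leI)
  qed
  then have "measure N (- K) \<le> 1 - measure M K"
    using prob_space.prob_le_1[OF M(1)] by (simp add: emeasure_eq_measure_prob[OF Np] ennreal_le_iff)
  then show ?thesis
    using prob_compl_borel[OF Np Ns] Kc by simp
qed

lemma regular_borel_prob_distr:
  fixes T :: "'a::topological_space \<Rightarrow> 'b::t2_space"
  assumes \<mu>: "regular_borel_prob \<mu>" and T: "continuous_on UNIV T"
  shows "regular_borel_prob (distr \<mu> borel T)"
proof -
  note \<mu>p = regular_borel_probD(1)[OF \<mu>] and \<mu>s = regular_borel_probD(2)[OF \<mu>]
    and \<mu>reg = regular_borel_probD(3)[OF \<mu>]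
  have Tm: "T \<in> \<mu> \<rightarrow>\<^sub>M borel"
    using measurable_borel_continuous_on[OF T \<mu>s] .
  have space: "space \<mu> = UNIV"
    using sets_eq_imp_space_eq[OF \<mu>s] by simp
  define D where "D = distr \<mu> borel T"
  have D: "emeasure D B = emeasure \<mu> (T -` B)" if "B \<in> sets borel" for B
    unfolding D_def using emeasure_distr[OF Tm that] space by simp
  have "emeasure D B \<le> (SUP K \<in> {K. compact K \<and> K \<subseteq> B}. emeasure D K)" if B: "B \<in> sets borel" for B
  proof -
    have "T -` B \<in> sets borel"
      using measurable_sets[OF Tm B] \<mu>s space by simp
    then have "emeasure D B = (SUP K \<in> {K. compact K \<and> K \<subseteq> T -` B}. emeasure \<mu> K)"
      using D[OF B] \<mu>reg by simp
    also have "\<dots> \<le> (SUP K \<in> {K. compact K \<and> K \<subseteq> B}. emeasure D K)"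
    proof (rule SUP_least)
      fix K assume "K \<in> {K. compact K \<and> K \<subseteq> T -` B}"
      then have K: "compact K" "K \<subseteq> T -` B" by auto
      have TK: "compact (T ` K)"
        using compact_continuous_image[OF continuous_on_subset[OF T] K(1)] by simp
      then have TKb: "T ` K \<in> sets borel"
        using borel_closed compact_imp_closed by blast
      have "emeasure \<mu> K \<le> emeasure \<mu> (T -` (T ` K))"
        using measurable_sets[OF Tm TKb] space by (intro emeasure_mono) auto
      also have "\<dots> = emeasure D (T ` K)"
        using D[OF TKb] by simp
      finally show "emeasure \<mu> K \<le> (SUP K \<in> {K. compact K \<and> K \<subseteq> B}. emeasure D K)"
        using TK K(2) by (blast intro: SUP_upper2)
    qed
    finally show ?thesis .
  qed
  moreover have "(SUP K \<in> {K. compact K \<and> K \<subseteq> B}. emeasure D K) \<le> emeasure D B"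
    if "B \<in> sets borel" for B
    using that by (intro SUP_least emeasure_mono) (auto simp: D_def)
  moreover have "prob_space D"
    unfolding D_def using prob_space.prob_space_distr[OF \<mu>p Tm] .
  moreover have "sets D = sets borel"
    unfolding D_def by simp
  ultimately show ?thesis
    unfolding regular_borel_prob_def D_def[symmetric] by (blast intro: antisym)
qed

lemma regular_borel_prob_eqI:
  fixes M N :: "'a::t2_space measure"
  assumes lc: "locally_compact_space (euclidean :: 'a topology)"
    and M: "regular_borel_prob M" and N: "regular_borel_prob N"
    and eq: "\<And>f. bcont f \<Longrightarrow> integral\<^sup>L M f = integral\<^sup>L N f"
  shows "M = N"
proof -
  note Mp = regular_borel_probD(1)[OF M] and Ms = regular_borel_probD(2)[OF M]
    and Np = regular_borel_probD(1)[OF N] and Ns = regular_borel_probD(2)[OF N]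
  have "measure M K = measure N K" if "compact K" for K
    using measure_compact_le_of_integral_eq[OF lc Mp Ms N eq that]
      measure_compact_le_of_integral_eq[OF lc Np Ns M eq[symmetric] that] by simp
  then have compact_eq: "emeasure M K = emeasure N K" if "compact K" for K
    using that by (simp add: emeasure_eq_measure_prob[OF Mp] emeasure_eq_measure_prob[OF Np])
  show ?thesis
  proof (rule measure_eqI)
    show "sets M = sets N"
      using Ms Ns by simp
    fix B assume "B \<in> sets M"
    then have B: "B \<in> sets borel"
      using Ms by simp
    have "(SUP K \<in> {K. compact K \<and> K \<subseteq> B}. emeasure M K)
        = (SUP K \<in> {K. compact K \<and> K \<subseteq> B}. emeasure N K)"
      using compact_eq by (intro SUP_cong) auto
    then show "emeasure M B = emeasure N B"
      using regular_borel_probD(3)[OF M B] regular_borel_probD(3)[OF N B] by simp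
  qed
qed

lemma tendsto_integral_distr_bcont:
  fixes f :: "'b::topological_space \<Rightarrow> real"
  assumes "finite_measure \<mu>" "\<And>k. Ts k \<in> \<mu> \<rightarrow>\<^sub>M borel" "T \<in> \<mu> \<rightarrow>\<^sub>M borel"
    and lim: "\<And>x. (\<lambda>k. Ts k x) \<longlonglongrightarrow> T x" and f: "bcont f"
  shows "(\<lambda>k. integral\<^sup>L (distr \<mu> borel (Ts k)) f) \<longlonglongrightarrow> integral\<^sup>L (distr \<mu> borel T) f"
proof -
  obtain B where B: "\<And>x. norm (f x) \<le> B"
    using bcont_bounded[OF f] by blast
  have fc: "continuous_on UNIV f"
    using f unfolding bcont_def by simp
  then have fm: "f \<in> borel_measurable borel"
    by (rule borel_measurable_continuous_onI)
  have "(\<lambda>k. integral\<^sup>L \<mu> (\<lambda>x. f (Ts k x))) \<longlonglongrightarrow> integral\<^sup>L \<mu> (\<lambda>x. f (T x))"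
  proof (rule integral_dominated_convergence[where w="\<lambda>_. B"])
    show "(\<lambda>x. f (T x)) \<in> borel_measurable \<mu>" "\<And>k. (\<lambda>x. f (Ts k x)) \<in> borel_measurable \<mu>"
      using assms(2,3) fm by measurable
    show "integrable \<mu> (\<lambda>_. B)"
      using assms(1) by (simp add: finite_measure.integrable_const)
    show "AE x in \<mu>. (\<lambda>k. f (Ts k x)) \<longlonglongrightarrow> f (T x)"
      using fc lim by (intro AE_I2 continuous_on_tendsto_compose[of UNIV f]) auto
    show "\<And>k. AE x in \<mu>. norm (f (Ts k x)) \<le> B"
      using B by simp
  qed
  then show ?thesis
    using integral_distr[OF assms(2) fm] integral_distr[OF assms(3) fm] by simp
qed

lemma msupp_return: "msupp (return borel (a::'a::t2_space)) = {a}"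
proof -
  have "x \<in> msupp (return borel a) \<longleftrightarrow> (\<forall>U. open U \<longrightarrow> x \<in> U \<longrightarrow> a \<in> U)" for x
    unfolding msupp_def by (auto simp: indicator_def)
  then show ?thesis
    using separation_t1 by blast
qed

lemma return_borel_inj: "return borel (a::'a::t2_space) = return borel b \<longleftrightarrow> a = b"
  by (metis msupp_return singleton_inject)

lemma msupp_distr_subset_range:
  assumes T: "T \<in> \<mu> \<rightarrow>\<^sub>M borel" and closed: "closed (range T)"
  shows "msupp (distr \<mu> borel T) \<subseteq> range T"
proof
  fix z assume z: "z \<in> msupp (distr \<mu> borel T)"
  have "emeasure (distr \<mu> borel T) (- range T) = emeasure \<mu> (T -` (- range T) \<inter> space \<mu>)"
    using closed by (intro emeasure_distr[OF T]) auto
  also have "T -` (- range T) \<inter> space \<mu> = {}"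
    by blast
  finally have "emeasure (distr \<mu> borel T) (- range T) = 0"
    by simp
  moreover have "\<forall>U. open U \<longrightarrow> z \<in> U \<longrightarrow> 0 < emeasure (distr \<mu> borel T) U"
    using z unfolding msupp_def by simp
  ultimately show "z \<in> range T"
    using closed by (metis ComplI less_irrefl open_Compl)
qed

lemma hypergroupD:
  fixes conv :: "'a::t2_space \<Rightarrow> 'a \<Rightarrow> 'a measure"
  assumes "hypergroup conv e iv"
  shows "locally_compact_space (euclidean :: 'a topology)"
    and "regular_borel_prob (conv x y)"
    and "bcont f \<Longrightarrow> continuous_on UNIV (\<lambda>(x, y). integral\<^sup>L (conv x y) f)"
    and "conv e x = return borel x"
    and "continuous_on UNIV iv"
    and "iv (iv x) = x"
    and "e \<in> msupp (conv x y) \<longleftrightarrow> x = iv y"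
  using assms unfolding hypergroup_def by auto

lemma hypergroup_sets_conv: "hypergroup conv e iv \<Longrightarrow> sets (conv x y) = sets borel"
  using hypergroupD(2) regular_borel_probD(2) by blast

lemma hg_hom_measurable: "hg_hom conv iv T \<Longrightarrow> sets M = sets borel \<Longrightarrow> T \<in> M \<rightarrow>\<^sub>M borel"
  unfolding hg_hom_def using measurable_borel_continuous_on by blast

lemma hg_hom_pointwise_limit:
  assumes H: "hypergroup conv e iv" and hom: "\<And>k. hg_hom conv iv (Ts k)"
    and lim: "\<And>x. (\<lambda>k. Ts k x) \<longlonglongrightarrow> T x" and T: "continuous_on UNIV T"
  shows "hg_hom conv iv T"
  unfolding hg_hom_def
proof (intro conjI allI T)
  fix x y
  show "distr (conv x (iv y)) borel T = conv (T x) (iv (T y))"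
  proof (rule regular_borel_prob_eqI[OF hypergroupD(1)[OF H]])
    show "regular_borel_prob (distr (conv x (iv y)) borel T)"
      using regular_borel_prob_distr[OF hypergroupD(2)[OF H] T] .
    show "regular_borel_prob (conv (T x) (iv (T y)))"
      using hypergroupD(2)[OF H] .
    fix f :: "'a \<Rightarrow> real" assume f: "bcont f"
    have "finite_measure (conv x (iv y))"
      using regular_borel_probD(1)[OF hypergroupD(2)[OF H]] by (simp add: prob_space_def)
    then have distr_lim: "(\<lambda>k. integral\<^sup>L (distr (conv x (iv y)) borel (Ts k)) f)
        \<longlonglongrightarrow> integral\<^sup>L (distr (conv x (iv y)) borel T) f"
      using hg_hom_measurable[OF hom hypergroup_sets_conv[OF H]]
        measurable_borel_continuous_on[OF T hypergroup_sets_conv[OF H]]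
      by (rule tendsto_integral_distr_bcont[OF _ _ _ lim f])
    have "(\<lambda>k. (Ts k x, iv (Ts k y))) \<longlonglongrightarrow> (T x, iv (T y))"
      using hypergroupD(5)[OF H] lim
      by (intro tendsto_Pair continuous_on_tendsto_compose[of UNIV iv]) auto
    from continuous_on_tendsto_compose[OF hypergroupD(3)[OF H f] this]
    have "(\<lambda>k. integral\<^sup>L (conv (Ts k x) (iv (Ts k y))) f)
        \<longlonglongrightarrow> integral\<^sup>L (conv (T x) (iv (T y))) f"
      by simp
    then have "(\<lambda>k. integral\<^sup>L (distr (conv x (iv y)) borel (Ts k)) f)
        \<longlonglongrightarrow> integral\<^sup>L (conv (T x) (iv (T y))) f"
      using hom unfolding hg_hom_def by simp
    with distr_lim show "integral\<^sup>L (distr (conv x (iv y)) borel T) f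
        = integral\<^sup>L (conv (T x) (iv (T y))) f"
      by (rule LIMSEQ_unique)
  qed
qed

lemma hypergroup_inv_identity:
  assumes "hypergroup conv e iv"
  shows "iv e = e"
  using hypergroupD(4)[OF assms, of e] hypergroupD(7)[OF assms, of e e] msupp_return[of e] by simp

lemma distr_return_hg_hom:
  "hg_hom conv iv T \<Longrightarrow> distr (return borel x) borel T = return borel (T x)"
  by (simp add: distr_return hg_hom_measurable)

lemma hg_hom_identity:
  assumes H: "hypergroup conv e iv" and T: "hg_hom conv iv T"
  shows "T e = e"
proof -
  have "conv (T e) (iv (T e)) = distr (conv e (iv e)) borel T"
    using T unfolding hg_hom_def by simp
  also have "\<dots> = return borel (T e)"
    using hypergroupD(4)[OF H] hypergroup_inv_identity[OF H] distr_return_hg_hom[OF T] by simp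
  finally have "msupp (conv (T e) (iv (T e))) = {T e}"
    using msupp_return by simp
  moreover have "e \<in> msupp (conv (T e) (iv (T e)))"
    using hypergroupD(6,7)[OF H] by simp
  ultimately show ?thesis
    by simp
qed

lemma hg_hom_inv:
  assumes H: "hypergroup conv e iv" and T: "hg_hom conv iv T"
  shows "T (iv x) = iv (T x)"
proof -
  have "return borel (T (iv x)) = distr (conv e (iv x)) borel T"
    using hypergroupD(4)[OF H] distr_return_hg_hom[OF T] by simp
  also have "\<dots> = conv (T e) (iv (T x))"
    using T unfolding hg_hom_def by simp
  also have "\<dots> = return borel (iv (T x))"
    using hypergroupD(4)[OF H] hg_hom_identity[OF H T] by simp
  finally show ?thesis
    by (simp only: return_borel_inj)
qed

lemma subhypergroup_range_hg_hom:
  assumes H: "hypergroup conv e iv" and T: "hg_hom conv iv T" and closed: "closed (range T)"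
  shows "subhypergroup conv iv (range T)"
  unfolding subhypergroup_def
proof (intro conjI ballI closed)
  fix a assume "a \<in> range T"
  then obtain u where u: "a = T u" by blast
  show "iv a \<in> range T"
    using hg_hom_inv[OF H T, of u] u by (metis rangeI)
  fix b assume "b \<in> range T"
  then obtain v where v: "b = T v" by blast
  have "conv a b = conv (T u) (iv (T (iv v)))"
    using u v hg_hom_inv[OF H T] hypergroupD(6)[OF H] by simp
  also have "\<dots> = distr (conv u (iv (iv v))) borel T"
    using T unfolding hg_hom_def by simp
  finally show "msupp (conv a b) \<subseteq> range T"
    using msupp_distr_subset_range[OF hg_hom_measurable[OF T hypergroup_sets_conv[OF H]] closed]
    by simp
qed

theorem mainTheorem7:
  fixes conv :: "'a::t2_space \<Rightarrow> 'a \<Rightarrow> 'a measure"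
    and e :: 'a and iv :: "'a \<Rightarrow> 'a"
    and Ts :: "nat \<Rightarrow> 'a \<Rightarrow> 'a" and T :: "'a \<Rightarrow> 'a"
  assumes "comm_hypergroup conv e iv"
    and "\<And>k. hg_aut conv iv (Ts k)"
    and "\<And>x. (\<lambda>k. Ts k x) \<longlonglongrightarrow> T x"
    and "continuous_on UNIV T"
    and "closed (range T)"
  shows "subhypergroup conv iv (range T) \<and>
         (\<forall>x y. distr (conv x (iv y)) borel T = conv (T x) (iv (T y)))"
proof -
  have H: "hypergroup conv e iv"
    using assms(1) unfolding comm_hypergroup_def by blast
  have T: "hg_hom conv iv T"
    using hg_hom_pointwise_limit[OF H _ assms(3,4)] assms(2) unfolding hg_aut_def by blast
  show ?thesis
    using subhypergroup_range_hg_hom[OF H T assms(5)] T unfolding hg_hom_def by blast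
qed

end
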